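(* Let $G$ be a finite group. The poset $\widetilde\Pi(G)$ is a chain (i.e., totally ordered) if and only if $G$ is a $p$-group for some prime $p$.
   Context: For a finite group $G$ and a subgroup $H\le G$, let $\pi_e(H)=\{o(x)\mid x\in H\}$ be the set of orders of elements of $H$. Let $\mathcal{L}(G)$ denote the set of all subgroups of $G$. Define an equivalence relation $\equiv$ on $\mathcal{L}(G)$ by $H_1\equiv H_2$ if and only if $\pi_e(H_1)=\pi_e(H_2)$, and denote the class of $H$ by $[H]$. The poset $\widetilde\Pi(G)$ is the set of equivalence classes $\mathcal{L}(G)/\!\equiv$ partially ordered by $[H_1]\lesssim[H_2]$ if and only if $\pi_e(H_1)\subseteq\pi_e(H_2)$. *)

theory Defs
  imports "HOL-Algebra.Algebra"
begin

definition pi_e :: "('a, 'b) monoid_scheme \<Rightarrow> 'a set \<Rightarrow> nat set" where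
  "pi_e G H = {group.ord G x | x. x \<in> H}"

text \<open>The poset of equivalence classes of subgroups modulo equal element-order sets.
  Each class [H] is represented faithfully by the set pi_e G H; the order on classes
  is inclusion of these sets.\<close>
definition Pi_tilde :: "('a, 'b) monoid_scheme \<Rightarrow> nat set set" where
  "Pi_tilde G = {pi_e G H | H. subgroup H G}"

end

theory Submission
  imports Defs
begin

text \<open>In a group of order \<open>p ^ n\<close> every element order is a power of \<open>p\<close>, and the element
  orders of a subgroup are closed under divisors (if \<open>o(x) = e * k\<close> then \<open>o(x ^ k) = e\<close>).
  Hence every \<open>\<pi>\<^sub>e(H)\<close> is an initial segment \<open>{1, p, \<dots>, p ^ m}\<close>, and any two such segments
  are comparable. Conversely, if distinct primes \<open>p\<close> and \<open>q\<close> divide \<open>|G|\<close>, Cauchy's theorem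
  gives subgroups of orders \<open>p\<close> and \<open>q\<close>, whose sets of element orders \<open>{1, p}\<close> and
  \<open>{1, q}\<close> are incomparable.\<close>

lemma (in group) ord_subgroup:
  assumes "subgroup H G"
  shows "group.ord (G\<lparr>carrier := H\<rparr>) x = ord x"
proof -
  have "group (G\<lparr>carrier := H\<rparr>)"
    using assms by (rule subgroup.subgroup_is_group) (rule is_group)
  then show ?thesis
    by (simp add: group.ord_def ord_def flip: nat_pow_consistent)
qed

lemma (in group) ord_dvd_card_subgroup:
  assumes "subgroup H G" "x \<in> H"
  shows "ord x dvd card H"
proof -
  have "group (G\<lparr>carrier := H\<rparr>)"
    using assms(1) by (rule subgroup.subgroup_is_group) (rule is_group)
  then have "group.ord (G\<lparr>carrier := H\<rparr>) x dvd order (G\<lparr>carrier := H\<rparr>)"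
    using assms(2) by (simp add: group.ord_dvd_group_order)
  then show ?thesis
    using assms(1) by (simp add: ord_subgroup order_def)
qed

lemma one_mem_pi_e:
  assumes "group G" "subgroup H G"
  shows "1 \<in> pi_e G H"
  unfolding pi_e_def using group.ord_id[OF assms(1)] subgroup.one_closed[OF assms(2)] by force

lemma pi_e_subgroup_of_prime_order:
  fixes G (structure)
  assumes "group G" "subgroup H G" "card H = p" "Factorial_Ring.prime p"
  shows "pi_e G H = {1, p}"
proof -
  interpret group G by fact
  have ord_cases: "ord x \<in> {1, p}" if "x \<in> H" for x
    using ord_dvd_card_subgroup[OF assms(2) that] assms(3,4) by (metis insert_iff prime_nat_iff)
  then have "pi_e G H \<subseteq> {1, p}"
    unfolding pi_e_def by blast
  moreover have "p \<in> pi_e G H"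
  proof -
    have "\<not> H \<subseteq> {\<one>}"
    proof
      assume "H \<subseteq> {\<one>}"
      then have "card H \<le> 1"
        using card_mono[of "{\<one>}" H] by simp
      with assms(3) prime_gt_1_nat[OF assms(4)] show False by simp
    qed
    then obtain x where x: "x \<in> H" "x \<noteq> \<one>" by blast
    then have "ord x \<noteq> 1"
      using ord_eq_1 subgroup.mem_carrier[OF assms(2)] by blast
    then show ?thesis
      using ord_cases[OF x(1)] x(1) unfolding pi_e_def by auto
  qed
  ultimately show ?thesis
    using one_mem_pi_e[OF assms(1,2)] by blast
qed

lemma pi_e_dvd_closed:
  fixes G (structure)
  assumes "group G" "finite (carrier G)" "subgroup H G" "d \<in> pi_e G H" "e dvd d"
  shows "e \<in> pi_e G H"
proof -
  interpret group G by fact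
  obtain x where x: "x \<in> H" "d = ord x"
    using assms(4) unfolding pi_e_def by blast
  have x_carrier: "x \<in> carrier G"
    using assms(3) x(1) by (rule subgroup.mem_carrier)
  have "d > 0"
    using ord_ge_1[OF assms(2) x_carrier] x(2) by simp
  obtain k where k: "d = e * k"
    using assms(5) by blast
  with \<open>d > 0\<close> have "k \<noteq> 0" "k dvd ord x" "ord x div k = e"
    using x(2) by auto
  then have "ord (x [^] k) = e"
    using ord_pow[OF x_carrier] by simp
  moreover have "x [^] k \<in> H"
    using subgroup_int_pow_closed[OF assms(3) x(1), of "int k"] by (simp add: int_pow_int)
  ultimately show ?thesis
    unfolding pi_e_def by blast
qed

lemma pi_e_subset_prime_powers:
  assumes "group G" "order G = p ^ n" "Factorial_Ring.prime p" "subgroup H G"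
  shows "pi_e G H \<subseteq> range ((^) p)"
proof
  interpret group G by fact
  fix d assume "d \<in> pi_e G H"
  then obtain x where "x \<in> H" "d = ord x"
    unfolding pi_e_def by blast
  then have "d dvd p ^ n"
    using ord_dvd_group_order subgroup.mem_carrier[OF assms(4)] assms(2) by metis
  then show "d \<in> range ((^) p)"
    using divides_primepow_nat[OF assms(3)] by blast
qed

lemma dvd_closed_sets_of_powers_comparable:
  fixes p :: nat
  assumes "A \<subseteq> range ((^) p)" "B \<subseteq> range ((^) p)"
    and "\<And>d e. d \<in> A \<Longrightarrow> e dvd d \<Longrightarrow> e \<in> A"
    and "\<And>d e. d \<in> B \<Longrightarrow> e dvd d \<Longrightarrow> e \<in> B"
  shows "A \<subseteq> B \<or> B \<subseteq> A"
proof (rule ccontr)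
  assume "\<not> (A \<subseteq> B \<or> B \<subseteq> A)"
  then obtain a b where "p ^ a \<in> A" "p ^ a \<notin> B" "p ^ b \<in> B" "p ^ b \<notin> A"
    using assms(1,2) by blast
  moreover have "p ^ a dvd p ^ b \<or> p ^ b dvd p ^ a"
    using le_imp_power_dvd nat_le_linear by blast
  ultimately show False
    using assms(3,4) by blast
qed

lemma prime_power_if_prime_divisors_eq:
  fixes n :: nat
  assumes "n > 0"
    and "\<And>p q. Factorial_Ring.prime p \<Longrightarrow> Factorial_Ring.prime q \<Longrightarrow> p dvd n \<Longrightarrow> q dvd n \<Longrightarrow> p = q"
  shows "\<exists>p k. Factorial_Ring.prime p \<and> n = p ^ k"
proof (cases "n = 1")
  case True
  then show ?thesis
    using two_is_prime_nat by (metis power_0)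
next
  case False
  then obtain p where p: "Factorial_Ring.prime p" "p dvd n"
    using prime_factor_nat by blast
  then have "prime_factors n = {p}"
    using assms by (auto simp: prime_factors_dvd)
  then have "n = p ^ multiplicity p n"
    using prime_factorization_nat[OF assms(1)] by simp
  with p(1) show ?thesis by blast
qed

lemma one_prime_mem_Pi_tilde:
  assumes "group G" "finite (carrier G)" "Factorial_Ring.prime p" "p dvd order G"
  shows "{1, p} \<in> Pi_tilde G"
proof -
  obtain m where m: "order G = p ^ 1 * m"
    using assms(4) by (metis dvdE power_one_right)
  obtain H where "subgroup H G" "card H = p"
    using sylow_thm[OF assms(3,1) m assms(2)] by auto
  moreover from this have "pi_e G H = {1, p}"
    by (rule pi_e_subgroup_of_prime_order[OF assms(1) _ _ assms(3)])
  ultimately show ?thesis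
    unfolding Pi_tilde_def by blast
qed

lemma Pi_tilde_chain_if_prime_power_order:
  assumes "group G" "finite (carrier G)" "Factorial_Ring.prime p" "order G = p ^ n"
  shows "Complete_Partial_Order.chain (\<subseteq>) (Pi_tilde G)"
proof (rule chainI)
  fix A B assume "A \<in> Pi_tilde G" "B \<in> Pi_tilde G"
  then obtain H K where H: "subgroup H G" "A = pi_e G H" and K: "subgroup K G" "B = pi_e G K"
    unfolding Pi_tilde_def by blast
  show "A \<subseteq> B \<or> B \<subseteq> A"
  proof (rule dvd_closed_sets_of_powers_comparable)
    show "A \<subseteq> range ((^) p)" "B \<subseteq> range ((^) p)"
      using H K pi_e_subset_prime_powers[OF assms(1,4,3)] by simp_all
    show "e \<in> A" if "d \<in> A" "e dvd d" for d e
      using H that pi_e_dvd_closed[OF assms(1,2)] by simp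
    show "e \<in> B" if "d \<in> B" "e dvd d" for d e
      using K that pi_e_dvd_closed[OF assms(1,2)] by simp
  qed
qed

lemma prime_power_order_if_Pi_tilde_chain:
  assumes "group G" "finite (carrier G)" "Complete_Partial_Order.chain (\<subseteq>) (Pi_tilde G)"
  shows "\<exists>p n. Factorial_Ring.prime p \<and> order G = p ^ n"
proof (rule prime_power_if_prime_divisors_eq)
  show "order G > 0"
    using assms(1,2) by (simp add: group.is_monoid monoid.order_gt_0_iff_finite)
next
  fix p q :: nat
  assume p: "Factorial_Ring.prime p" "p dvd order G" and q: "Factorial_Ring.prime q" "q dvd order G"
  then have "{1, p} \<in> Pi_tilde G" "{1, q} \<in> Pi_tilde G"
    using one_prime_mem_Pi_tilde[OF assms(1,2)] by simp_all
  then have "{1, p} \<subseteq> {1, q} \<or> {1, q} \<subseteq> {1, p}"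
    by (rule chainD[OF assms(3)])
  moreover have "p \<noteq> 1" "q \<noteq> 1"
    using prime_gt_1_nat p(1) q(1) by fastforce+
  ultimately show "p = q"
    by auto
qed

theorem theorem2p1:
  fixes G :: "('a, 'b) monoid_scheme"
  assumes "group G" and "finite (carrier G)"
  shows "Complete_Partial_Order.chain (\<subseteq>) (Pi_tilde G) \<longleftrightarrow>
         (\<exists>p n. Factorial_Ring.prime (p::nat) \<and> order G = p ^ n)"
  using Pi_tilde_chain_if_prime_power_order[OF assms] prime_power_order_if_Pi_tilde_chain[OF assms]
  by blast

end
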